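(* Let $\alpha\in[0,1]$, let $\mathbf X\in\mathbb R^{d\times n}$, $\mathbf V\in\mathbb R^{m\times d}$, $\mathbf W\in\mathbb R^{k\times m}$, and for $i=1,\dots,m$ let $\boldsymbol\Lambda^i\in\mathbb R^{n\times n}$ be diagonal with $(\boldsymbol\Lambda^i)_{jj}=\sigma'((\mathbf V_{i\bullet}\mathbf X)_j)$, where $\sigma(z)=\max\{\alpha z,z\}$ is the Leaky-ReLU and $\sigma'$ takes values in $\{\alpha,1\}$ (any choice in $\{\alpha,1\}$ at $z=0$). Define $$\boldsymbol\Gamma=\sum_{i=1}^m\boldsymbol\Lambda^i\mathbf X^\top\mathbf V_{i\bullet}^\top\mathbf V_{i\bullet}\mathbf X\boldsymbol\Lambda^i,\qquad \widehat{\mathbf G}_O=\sum_{i=1}^m\boldsymbol\Lambda^i\mathbf X^\top\mathbf X\boldsymbol\Lambda^i\otimes\mathbf W_{\bullet i}\mathbf W_{\bullet i}^\top+\boldsymbol\Gamma\otimes\mathbf I_k\in\mathbb R^{kn\times kn}.$$ If $\alpha^2\sigma_{\min}^2(\mathbf X)\sigma_{\min}^2(\mathbf W)+\lambda_{\min}(\boldsymbol\Gamma)>0$, then $\widehat{\mathbf G}_O$ is positive definite and $$\kappa(\widehat{\mathbf G}_O)\le\frac{\sigma_{\max}^2(\mathbf X)\,\sigma_{\max}^2(\mathbf W)+\lambda_{\max}(\boldsymbol\Gamma)}{\alpha^2\,\sigma_{\min}^2(\mathbf X)\,\sigma_{\min}^2(\mathbf W)+\lambda_{\min}(\boldsymb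ol\Gamma)}.$$
   Context: $\mathbf X$ is the data matrix with columns the $n$ inputs; $\mathbf V_{i\bullet}$ is the $i$-th row of $\mathbf V$ and $\mathbf W_{\bullet i}$ the $i$-th column of $\mathbf W$; $\widehat{\mathbf G}_O$ has the same nonzero eigenvalues as the Gauss–Newton matrix of $F(\mathbf x)=\mathbf W\sigma(\mathbf V\mathbf x)$. Conventions: $\sigma_{\max}^2(\mathbf X)=\lambda_{\max}(\mathbf X^\top\mathbf X)$, $\sigma_{\min}^2(\mathbf X)=\lambda_{\min}(\mathbf X^\top\mathbf X)$, $\sigma_{\max}^2(\mathbf W)=\lambda_{\max}(\mathbf W\mathbf W^\top)$, $\sigma_{\min}^2(\mathbf W)=\lambda_{\min}(\mathbf W\mathbf W^\top)$. For a symmetric positive definite matrix, $\kappa=\lambda_{\max}/\lambda_{\min}$. $\otimes$ is the Kronecker product. *)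

theory Defs
  imports "HOL-Analysis.Analysis"
begin

definition mat_eigenvalue :: "real^'n^'n \<Rightarrow> real \<Rightarrow> bool" where
  "mat_eigenvalue A \<mu> \<longleftrightarrow> (\<exists>v. v \<noteq> 0 \<and> A *v v = \<mu> *\<^sub>R v)"

text \<open>Largest / smallest (real) eigenvalue; intended for symmetric matrices,
  whose eigenvalues are all real.\<close>
definition lambda_max :: "real^'n^'n \<Rightarrow> real" where
  "lambda_max A = Max {\<mu>. mat_eigenvalue A \<mu>}"

definition lambda_min :: "real^'n^'n \<Rightarrow> real" where
  "lambda_min A = Min {\<mu>. mat_eigenvalue A \<mu>}"

definition symmetric_mat :: "real^'n^'n \<Rightarrow> bool" where
  "symmetric_mat A \<longleftrightarrow> transpose A = A"

definition pos_def :: "real^'n^'n \<Rightarrow> bool" where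
  "pos_def A \<longleftrightarrow> symmetric_mat A \<and> (\<forall>x. x \<noteq> 0 \<longrightarrow> x \<bullet> (A *v x) > 0)"

definition cond_num :: "real^'n^'n \<Rightarrow> real" where
  "cond_num A = lambda_max A / lambda_min A"

text \<open>Squared extreme singular values, by the paper's conventions:
  for X (d x n): sigma^2(X) from X^T X; for W (k x m): sigma^2(W) from W W^T.\<close>
definition sigma_max_sq_X :: "real^'n^'d \<Rightarrow> real" where
  "sigma_max_sq_X X = lambda_max (transpose X ** X)"
definition sigma_min_sq_X :: "real^'n^'d \<Rightarrow> real" where
  "sigma_min_sq_X X = lambda_min (transpose X ** X)"
definition sigma_max_sq_W :: "real^'m^'k \<Rightarrow> real" where
  "sigma_max_sq_W W = lambda_max (W ** transpose W)"
definition sigma_min_sq_W :: "real^'m^'k \<Rightarrow> real" where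
  "sigma_min_sq_W W = lambda_min (W ** transpose W)"

text \<open>Kronecker product; the row/column index of A \<otimes> B is the pair (i,a),
  corresponding to the index (i-1)k + a of the paper.\<close>
definition kron :: "real^'n^'n \<Rightarrow> real^'k^'k \<Rightarrow> real^('n \<times> 'k)^('n \<times> 'k)" where
  "kron A B = (\<chi> p q. A $ fst p $ fst q * B $ snd p $ snd q)"

definition outer :: "real^'a \<Rightarrow> real^'a^'a" where
  "outer u = (\<chi> i j. u $ i * u $ j)"

definition diag_mat :: "real^'n \<Rightarrow> real^'n^'n" where
  "diag_mat s = (\<chi> i j. if i = j then s $ i else 0)"

definition leaky_relu :: "real \<Rightarrow> real \<Rightarrow> real" where
  "leaky_relu \<alpha> z = max (\<alpha> * z) z"

definition leaky_relu_deriv_choice :: "real \<Rightarrow> real \<Rightarrow> real \<Rightarrow> bool" where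
  "leaky_relu_deriv_choice \<alpha> z s \<longleftrightarrow>
     s \<in> {\<alpha>, 1} \<and> (z > 0 \<longrightarrow> s = 1) \<and> (z < 0 \<longrightarrow> s = \<alpha>)"

end

theory Submission
  imports Defs
begin

text \<open>Read x as the n x k matrix M with M j a = x (j, a). The quadratic form of G_O at x is
  the sum over i of |X Lam_i M W_i|^2 plus the sum over the columns M_a of M_a' Gamma M_a.
  The second sum lies between lambda_min(Gamma) |x|^2 and lambda_max(Gamma) |x|^2. In the
  first, the entries of the diagonal matrices Lam_i lie in {alpha, 1}, so the i-th summand lies
  between alpha^2 sigma_min^2(X) |M W_i|^2 and sigma_max^2(X) |M W_i|^2; and the sum over i of
  |M W_i|^2 is the sum over the rows M_j of M_j W W' M_j', which lies between
  sigma_min^2(W) |x|^2 and sigma_max^2(W) |x|^2. Since the extreme eigenvalues of a symmetric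
  matrix are the extreme values of its Rayleigh quotient, these two-sided bounds on the form
  bound the spectrum of G_O.\<close>

lemma symmetric_mat_iff: "symmetric_mat A \<longleftrightarrow> (\<forall>i j. A $ i $ j = A $ j $ i)"
  unfolding symmetric_mat_def transpose_def vec_eq_iff by auto

lemma symmetric_mat_inner_commute: "symmetric_mat A \<Longrightarrow> x \<bullet> (A *v y) = (A *v x) \<bullet> y"
  by (metis dot_lmul_matrix symmetric_mat_def transpose_matrix_vector)

lemma symmetric_mat_add: "symmetric_mat A \<Longrightarrow> symmetric_mat B \<Longrightarrow> symmetric_mat (A + B)"
  unfolding symmetric_mat_iff by simp

lemma symmetric_mat_sum: "(\<And>i. i \<in> S \<Longrightarrow> symmetric_mat (f i)) \<Longrightarrow> symmetric_mat (sum f S)"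
  unfolding symmetric_mat_iff by simp

lemma symmetric_mat_uminus: "symmetric_mat A \<Longrightarrow> symmetric_mat (- A)"
  unfolding symmetric_mat_iff by simp

lemma symmetric_mat_mat: "symmetric_mat (mat c)"
  unfolding symmetric_mat_iff mat_def by simp

lemma symmetric_mat_diag_mat: "symmetric_mat (diag_mat s)"
  unfolding symmetric_mat_iff diag_mat_def by simp

lemma symmetric_mat_outer: "symmetric_mat (outer u)"
  unfolding symmetric_mat_iff outer_def by (simp add: mult.commute)

lemma symmetric_mat_kron: "symmetric_mat A \<Longrightarrow> symmetric_mat B \<Longrightarrow> symmetric_mat (kron A B)"
  unfolding symmetric_mat_iff kron_def by simp

lemma symmetric_mat_sandwich:
  "symmetric_mat D \<Longrightarrow> symmetric_mat A \<Longrightarrow> symmetric_mat (D ** transpose X ** A ** X ** D)"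
  unfolding symmetric_mat_def by (simp add: matrix_transpose_mul matrix_mul_assoc)

lemma symmetric_mat_sandwich_gram: "symmetric_mat D \<Longrightarrow> symmetric_mat (D ** transpose X ** X ** D)"
  unfolding symmetric_mat_def by (simp add: matrix_transpose_mul matrix_mul_assoc)

lemma symmetric_mat_gram: "symmetric_mat (transpose B ** B)"
  unfolding symmetric_mat_def by (simp add: matrix_transpose_mul)

lemma gram_form: "x \<bullet> ((transpose B ** B) *v x) = (B *v x) \<bullet> (B *v (x :: real^'n))"
proof -
  have "x \<bullet> ((transpose B ** B) *v x) = x \<bullet> (transpose B *v (B *v x))"
    by (simp only: matrix_vector_mul_assoc)
  also have "\<dots> = (B *v x) \<bullet> (B *v x)"
    using dot_lmul_matrix[of "B *v x" B x] by (simp add: inner_commute)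
  finally show ?thesis .
qed

lemma matrix_vector_mult_sum_left: "(\<Sum>i\<in>S. M i) *v x = (\<Sum>i\<in>S. M i *v x)"
  by (induct S rule: infinite_finite_induct) (auto simp: matrix_vector_mult_add_rdistrib)

lemma matrix_vector_mult_uminus_left: "(- A) *v x = - (A *v (x :: real^'n))"
  by (simp add: vec_eq_iff matrix_vector_mult_def sum_negf)

lemma mat_eigenvalue_uminus: "mat_eigenvalue (- A) \<mu> \<longleftrightarrow> mat_eigenvalue A (- \<mu>)"
  unfolding mat_eigenvalue_def matrix_vector_mult_uminus_left
  by (metis minus_equation_iff scaleR_minus_left)

lemma mat_eigenvalue_form:
  "mat_eigenvalue A \<mu> \<Longrightarrow> \<exists>v. v \<noteq> 0 \<and> v \<bullet> (A *v v) = \<mu> * (v \<bullet> v)"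
  unfolding mat_eigenvalue_def by auto

text \<open>Eigenvectors for distinct eigenvalues of a symmetric matrix are orthogonal, hence
  independent, so there are at most as many eigenvalues as dimensions.\<close>
lemma finite_eigenvalues:
  assumes A: "symmetric_mat A"
  shows "finite {\<mu>. mat_eigenvalue A \<mu>}"
proof -
  define E where "E = {\<mu>. mat_eigenvalue A \<mu>}"
  define ev where "ev \<mu> = (SOME v. v \<noteq> 0 \<and> A *v v = \<mu> *\<^sub>R v)" for \<mu>
  have ev: "ev \<mu> \<noteq> 0 \<and> A *v ev \<mu> = \<mu> *\<^sub>R ev \<mu>" if "\<mu> \<in> E" for \<mu>
    using that someI_ex[of "\<lambda>v. v \<noteq> 0 \<and> A *v v = \<mu> *\<^sub>R v"]
    unfolding E_def mat_eigenvalue_def ev_def by blast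
  have inj: "inj_on ev E"
  proof (rule inj_onI)
    fix a b assume a: "a \<in> E" and b: "b \<in> E" and eq: "ev a = ev b"
    have "a *\<^sub>R ev a = b *\<^sub>R ev a" using ev[OF a] ev[OF b] eq by metis
    then show "a = b" using ev[OF a] by simp
  qed
  have "pairwise orthogonal (ev ` E)"
  proof (auto simp: pairwise_def)
    fix a b assume a: "a \<in> E" and b: "b \<in> E" and ne: "ev a \<noteq> ev b"
    have "a * (ev a \<bullet> ev b) = (A *v ev a) \<bullet> ev b" using ev[OF a] by simp
    also have "\<dots> = ev a \<bullet> (A *v ev b)" using symmetric_mat_inner_commute[OF A] by simp
    also have "\<dots> = b * (ev a \<bullet> ev b)" using ev[OF b] by simp
    finally have "(a - b) * (ev a \<bullet> ev b) = 0" by (simp add: algebra_simps)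
    then show "orthogonal (ev a) (ev b)" using ne by (auto simp: orthogonal_def)
  qed
  moreover have "0 \<notin> ev ` E" using ev by auto
  ultimately have "finite (ev ` E)"
    using pairwise_orthogonal_independent independent_bound by blast
  then show ?thesis using inj finite_imageD unfolding E_def by blast
qed

lemma nonneg_quadratic_imp_linear_coeff_0:
  fixes b c :: real
  assumes nonneg: "\<And>t. 0 \<le> 2 * t * b + t\<^sup>2 * c" and "0 \<le> c"
  shows "b = 0"
proof (rule ccontr)
  assume "b \<noteq> 0"
  define t where "t = - b / (c + 1)"
  have tc: "t * (c + 1) = - b" unfolding t_def using \<open>0 \<le> c\<close> by simp
  have "(c + 1)\<^sup>2 * (2 * t * b + t\<^sup>2 * c) = 2 * b * (c + 1) * (t * (c + 1)) + c * (t * (c + 1))\<^sup>2"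
    by (simp add: power2_eq_square algebra_simps)
  also have "\<dots> = - (b\<^sup>2 * (c + 2))" unfolding tc by (simp add: power2_eq_square algebra_simps)
  finally have "(c + 1)\<^sup>2 * (2 * t * b + t\<^sup>2 * c) < 0"
    using \<open>b \<noteq> 0\<close> \<open>0 \<le> c\<close> by simp
  moreover have "0 \<le> (c + 1)\<^sup>2 * (2 * t * b + t\<^sup>2 * c)"
    by (intro mult_nonneg_nonneg zero_le_power2 nonneg)
  ultimately show False by (meson leD)
qed

lemma psd_form_eq_0_imp_mult_eq_0:
  assumes B: "symmetric_mat B" and psd: "\<And>x. 0 \<le> x \<bullet> (B *v x)" and u: "u \<bullet> (B *v u) = 0"
  shows "B *v u = 0"
proof -
  define y where "y = B *v u"
  have uy: "u \<bullet> (B *v y) = y \<bullet> y"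
    unfolding y_def using symmetric_mat_inner_commute[OF B, of u "B *v u"] by simp
  have "0 \<le> 2 * t * (y \<bullet> y) + t\<^sup>2 * (y \<bullet> (B *v y))" for t
  proof -
    have "(u + t *\<^sub>R y) \<bullet> (B *v (u + t *\<^sub>R y))
        = u \<bullet> (B *v u) + t * (u \<bullet> (B *v y)) + t * (y \<bullet> (B *v u)) + t\<^sup>2 * (y \<bullet> (B *v y))"
      by (simp add: power2_eq_square algebra_simps)
    also have "\<dots> = 2 * t * (y \<bullet> y) + t\<^sup>2 * (y \<bullet> (B *v y))"
      using u uy by (simp add: y_def[symmetric])
    finally show ?thesis using psd[of "u + t *\<^sub>R y"] by linarith
  qed
  then have "y \<bullet> y = 0" using psd nonneg_quadratic_imp_linear_coeff_0 by blast
  then show ?thesis unfolding y_def by simp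
qed

text \<open>The minimum of the Rayleigh quotient over the unit sphere is attained, and a minimiser
  is an eigenvector, since it lies in the kernel of the positive semidefinite A - m I.\<close>
lemma symmetric_mat_eigenvalue_below_form:
  assumes A: "symmetric_mat A"
  shows "\<exists>m. mat_eigenvalue A m \<and> (\<forall>x. m * (x \<bullet> x) \<le> x \<bullet> (A *v x))"
proof -
  define f where "f x = x \<bullet> (A *v x)" for x
  have "sphere (0::real^'n) 1 \<noteq> {}"
    using norm_axis_1 by (metis mem_sphere_0 empty_iff)
  moreover have "continuous_on (sphere 0 1) f" unfolding f_def by (intro continuous_intros)
  ultimately obtain u where u: "u \<in> sphere 0 1" and min: "\<And>y. y \<in> sphere 0 1 \<Longrightarrow> f u \<le> f y"
    using continuous_attains_inf[OF compact_sphere] by blast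
  define m where "m = f u"
  have below: "m * (x \<bullet> x) \<le> x \<bullet> (A *v x)" for x
  proof (cases "x = 0")
    case False
    have "m \<le> f ((1 / norm x) *\<^sub>R x)" using False min unfolding m_def by simp
    also have "\<dots> = f x / (norm x)\<^sup>2" unfolding f_def
      by (simp add: matrix_vector_mult_scaleR power2_eq_square)
    finally show ?thesis using False unfolding f_def by (simp add: field_simps power2_norm_eq_inner)
  qed simp
  define B where "B = A - m *\<^sub>R mat 1"
  have Bv: "B *v x = A *v x - m *\<^sub>R x" for x
    unfolding B_def by (simp add: matrix_vector_mult_diff_rdistrib flip: scaleR_matrix_vector_assoc)
  have "symmetric_mat B" using A unfolding symmetric_mat_iff B_def by (simp add: mat_def)
  moreover have "0 \<le> x \<bullet> (B *v x)" for x using below[of x] unfolding Bv by (simp add: inner_diff_right)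
  moreover have "u \<bullet> (B *v u) = 0" unfolding Bv m_def f_def using u
    by (simp add: inner_diff_right dot_square_norm)
  ultimately have "B *v u = 0" by (rule psd_form_eq_0_imp_mult_eq_0)
  then have "A *v u = m *\<^sub>R u" unfolding Bv by simp
  moreover have "u \<noteq> 0" using u by auto
  ultimately have "mat_eigenvalue A m" unfolding mat_eigenvalue_def by blast
  with below show ?thesis by blast
qed

lemma
  assumes A: "symmetric_mat A"
  shows mat_eigenvalue_lambda_min: "mat_eigenvalue A (lambda_min A)"
    and lambda_min_le_form: "lambda_min A * (x \<bullet> x) \<le> x \<bullet> (A *v x)"
proof -
  obtain m where m: "mat_eigenvalue A m" and below: "\<forall>x. m * (x \<bullet> x) \<le> x \<bullet> (A *v x)"
    using symmetric_mat_eigenvalue_below_form[OF A] by blast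
  have "lambda_min A = m" unfolding lambda_min_def
  proof (rule Min_eqI)
    fix \<mu> assume "\<mu> \<in> {\<mu>. mat_eigenvalue A \<mu>}"
    then obtain v where "v \<noteq> 0" "v \<bullet> (A *v v) = \<mu> * (v \<bullet> v)"
      using mat_eigenvalue_form by blast
    with below have "m * (v \<bullet> v) \<le> \<mu> * (v \<bullet> v)" by metis
    with \<open>v \<noteq> 0\<close> show "m \<le> \<mu>" by simp
  qed (use m finite_eigenvalues[OF A] in auto)
  then show "mat_eigenvalue A (lambda_min A)" "lambda_min A * (x \<bullet> x) \<le> x \<bullet> (A *v x)"
    using m below by simp_all
qed

lemma lambda_min_greatest:
  assumes A: "symmetric_mat A" and below: "\<And>x. c * (x \<bullet> x) \<le> x \<bullet> (A *v x)"
  shows "c \<le> lambda_min A"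
proof -
  obtain v where "v \<noteq> 0" "v \<bullet> (A *v v) = lambda_min A * (v \<bullet> v)"
    using mat_eigenvalue_form[OF mat_eigenvalue_lambda_min[OF A]] by blast
  with below[of v] have "c * (v \<bullet> v) \<le> lambda_min A * (v \<bullet> v)" by simp
  with \<open>v \<noteq> 0\<close> show ?thesis by simp
qed

lemma lambda_max_eq_uminus_lambda_min:
  assumes A: "symmetric_mat A"
  shows "lambda_max A = - lambda_min (- A)"
  unfolding lambda_max_def
proof (rule Max_eqI)
  have A': "symmetric_mat (- A)" using A by (rule symmetric_mat_uminus)
  show "- lambda_min (- A) \<in> {\<mu>. mat_eigenvalue A \<mu>}"
    using mat_eigenvalue_lambda_min[OF A'] by (simp add: mat_eigenvalue_uminus)
  fix \<mu> assume "\<mu> \<in> {\<mu>. mat_eigenvalue A \<mu>}"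
  then have "- \<mu> \<in> {\<mu>. mat_eigenvalue (- A) \<mu>}" by (simp add: mat_eigenvalue_uminus)
  then have "lambda_min (- A) \<le> - \<mu>"
    unfolding lambda_min_def by (rule Min_le[OF finite_eigenvalues[OF A']])
  then show "\<mu> \<le> - lambda_min (- A)" by simp
qed (rule finite_eigenvalues[OF A])

lemma form_le_lambda_max:
  assumes A: "symmetric_mat A"
  shows "x \<bullet> (A *v x) \<le> lambda_max A * (x \<bullet> x)"
  using lambda_min_le_form[OF symmetric_mat_uminus[OF A], of x]
  unfolding lambda_max_eq_uminus_lambda_min[OF A] matrix_vector_mult_uminus_left by simp

lemma lambda_max_least:
  assumes A: "symmetric_mat A" and above: "\<And>x. x \<bullet> (A *v x) \<le> c * (x \<bullet> x)"
  shows "lambda_max A \<le> c"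
proof -
  have "- c \<le> lambda_min (- A)"
    using above by (intro lambda_min_greatest symmetric_mat_uminus A)
      (simp add: matrix_vector_mult_uminus_left)
  then show ?thesis unfolding lambda_max_eq_uminus_lambda_min[OF A] by simp
qed

lemma lambda_min_le_lambda_max:
  assumes A: "symmetric_mat A"
  shows "lambda_min A \<le> lambda_max A"
proof -
  obtain v where "v \<noteq> 0" "v \<bullet> (A *v v) = lambda_min A * (v \<bullet> v)"
    using mat_eigenvalue_form[OF mat_eigenvalue_lambda_min[OF A]] by blast
  with form_le_lambda_max[OF A, of v] have "lambda_min A * (v \<bullet> v) \<le> lambda_max A * (v \<bullet> v)"
    by simp
  with \<open>v \<noteq> 0\<close> show ?thesis by simp
qed

lemma pos_def_cond_num_le:
  assumes A: "symmetric_mat A" and "0 < L"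
    and below: "\<And>x. L * (x \<bullet> x) \<le> x \<bullet> (A *v x)"
    and above: "\<And>x. x \<bullet> (A *v x) \<le> U * (x \<bullet> x)"
  shows "pos_def A \<and> cond_num A \<le> U / L"
proof
  have "0 < x \<bullet> (A *v x)" if "x \<noteq> 0" for x
  proof -
    have "0 < L * (x \<bullet> x)" using \<open>0 < L\<close> that by simp
    with below[of x] show ?thesis by linarith
  qed
  with A show "pos_def A" unfolding pos_def_def by blast
  have "L \<le> lambda_min A" "lambda_max A \<le> U"
    using lambda_min_greatest[OF A below] lambda_max_least[OF A above] .
  with lambda_min_le_lambda_max[OF A] \<open>0 < L\<close> show "cond_num A \<le> U / L"
    unfolding cond_num_def by (intro frac_le) auto
qed

lemma sigma_min_sq_W_eq: "sigma_min_sq_W W = sigma_min_sq_X (transpose W)"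
  unfolding sigma_min_sq_W_def sigma_min_sq_X_def by simp

lemma sigma_max_sq_W_eq: "sigma_max_sq_W W = sigma_max_sq_X (transpose W)"
  unfolding sigma_max_sq_W_def sigma_max_sq_X_def by simp

lemma
  shows sigma_min_sq_X_le: "sigma_min_sq_X X * (v \<bullet> v) \<le> (X *v v) \<bullet> (X *v v)"
    and sigma_max_sq_X_ge: "(X *v v) \<bullet> (X *v v) \<le> sigma_max_sq_X X * (v \<bullet> v)"
  unfolding sigma_min_sq_X_def sigma_max_sq_X_def gram_form[symmetric]
  by (simp_all add: lambda_min_le_form form_le_lambda_max symmetric_mat_gram)

lemma sigma_min_sq_X_nonneg: "0 \<le> sigma_min_sq_X X"
  unfolding sigma_min_sq_X_def
  by (rule lambda_min_greatest[OF symmetric_mat_gram]) (simp add: gram_form)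

lemma sigma_max_sq_X_nonneg: "0 \<le> sigma_max_sq_X X"
  using sigma_min_sq_X_nonneg[of X] lambda_min_le_lambda_max[OF symmetric_mat_gram, of X]
  unfolding sigma_min_sq_X_def sigma_max_sq_X_def by linarith

definition unvec :: "real^('n \<times> 'k) \<Rightarrow> real^'k^'n" where
  "unvec x = (\<chi> j a. x $ (j, a))"

lemma sum_UNIV_prod:
  "sum f (UNIV :: ('a::finite \<times> 'b::finite) set) = (\<Sum>j\<in>UNIV. \<Sum>a\<in>UNIV. f (j, a))"
  by (simp add: sum.cartesian_product UNIV_Times_UNIV[symmetric] del: UNIV_Times_UNIV)

lemma inner_unvec_rows: "x \<bullet> y = (\<Sum>j\<in>UNIV. row j (unvec x) \<bullet> row j (unvec y))"
  unfolding inner_vec_def sum_UNIV_prod by (simp add: row_def unvec_def)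

lemma inner_unvec_columns: "x \<bullet> y = (\<Sum>a\<in>UNIV. column a (unvec x) \<bullet> column a (unvec y))"
  unfolding inner_vec_def sum_UNIV_prod by (simp add: column_def unvec_def) (rule sum.swap)

lemma sum_swap3:
  "(\<Sum>a\<in>A. \<Sum>c\<in>C. \<Sum>b\<in>B. f a c b) = (\<Sum>c\<in>C. \<Sum>b\<in>B. \<Sum>a\<in>A. f a c b)"
  by (simp add: sum.swap[of _ A C] sum.swap[of _ A B])

lemma form_kron_outer:
  "x \<bullet> (kron A (outer w) *v x) = (unvec x *v w) \<bullet> (A *v (unvec x *v w))"
proof -
  have "x \<bullet> (kron A (outer w) *v x)
      = (\<Sum>j\<in>UNIV. \<Sum>a\<in>UNIV. x$(j,a) * (\<Sum>j'\<in>UNIV. \<Sum>b\<in>UNIV. A$j$j' * (w$a * w$b) * x$(j',b)))"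
    by (simp add: inner_vec_def matrix_vector_mult_def kron_def outer_def sum_UNIV_prod)
  also have "\<dots> = (\<Sum>j\<in>UNIV. \<Sum>a\<in>UNIV. \<Sum>j'\<in>UNIV. \<Sum>b\<in>UNIV.
                     (x$(j,a) * w$a) * (A$j$j' * (x$(j',b) * w$b)))"
    by (simp add: sum_distrib_left) (intro sum.cong refl; simp add: mult_ac)
  also have "\<dots> = (\<Sum>j\<in>UNIV. \<Sum>j'\<in>UNIV. \<Sum>b\<in>UNIV. \<Sum>a\<in>UNIV.
                     (x$(j,a) * w$a) * (A$j$j' * (x$(j',b) * w$b)))"
    by (intro sum.cong refl, rule sum_swap3)
  also have "\<dots> = (\<Sum>j\<in>UNIV. (\<Sum>a\<in>UNIV. x$(j,a) * w$a) *
                     (\<Sum>j'\<in>UNIV. A$j$j' * (\<Sum>b\<in>UNIV. x$(j',b) * w$b)))"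
    by (simp add: sum_distrib_left sum_distrib_right)
  finally show ?thesis by (simp add: inner_vec_def matrix_vector_mult_def unvec_def)
qed

lemma form_kron_mat_1:
  "x \<bullet> (kron A (mat 1) *v x) = (\<Sum>a\<in>UNIV. column a (unvec x) \<bullet> (A *v column a (unvec x)))"
proof -
  have "x \<bullet> (kron A (mat 1) *v x)
      = (\<Sum>j\<in>UNIV. \<Sum>a\<in>UNIV. x$(j,a) * (\<Sum>j'\<in>UNIV. \<Sum>b\<in>UNIV. A$j$j' * mat 1$a$b * x$(j',b)))"
    by (simp add: inner_vec_def matrix_vector_mult_def kron_def sum_UNIV_prod)
  also have "\<dots> = (\<Sum>j\<in>UNIV. \<Sum>a\<in>UNIV. x$(j,a) * (\<Sum>j'\<in>UNIV. A$j$j' * x$(j',a)))"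
    by (intro sum.cong refl arg_cong2[where f="(*)"])
      (simp add: mat_def if_distrib if_distribR cong: if_cong)
  also have "\<dots> = (\<Sum>a\<in>UNIV. \<Sum>j\<in>UNIV. x$(j,a) * (\<Sum>j'\<in>UNIV. A$j$j' * x$(j',a)))"
    by (rule sum.swap)
  finally show ?thesis by (simp add: inner_vec_def matrix_vector_mult_def column_def unvec_def)
qed

lemma
  assumes "symmetric_mat A"
  shows lambda_min_le_form_kron_mat_1: "lambda_min A * (x \<bullet> x) \<le> x \<bullet> (kron A (mat 1) *v x)"
    and form_kron_mat_1_le_lambda_max: "x \<bullet> (kron A (mat 1) *v x) \<le> lambda_max A * (x \<bullet> x)"
  unfolding form_kron_mat_1 inner_unvec_columns[of x x] sum_distrib_left
  by (intro sum_mono lambda_min_le_form form_le_lambda_max assms)+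

lemma sum_inner_mult_columns_eq_rows:
  fixes M :: "real^'k^'n" and W :: "real^'m^'k"
  shows "(\<Sum>i\<in>UNIV. (M *v column i W) \<bullet> (M *v column i W))
       = (\<Sum>j\<in>UNIV. (transpose W *v row j M) \<bullet> (transpose W *v row j M))"
  unfolding inner_vec_def
  by (simp add: matrix_vector_mult_def column_def row_def transpose_def mult.commute) (rule sum.swap)

lemma
  fixes W :: "real^'m^'k" and x :: "real^('n::finite \<times> 'k)"
  shows sigma_min_sq_W_le_sum_unvec: "sigma_min_sq_W W * (x \<bullet> x)
           \<le> (\<Sum>i\<in>UNIV. (unvec x *v column i W) \<bullet> (unvec x *v column i W))"
    and sum_unvec_le_sigma_max_sq_W: "(\<Sum>i\<in>UNIV. (unvec x *v column i W) \<bullet> (unvec x *v column i W))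
           \<le> sigma_max_sq_W W * (x \<bullet> x)"
  unfolding sum_inner_mult_columns_eq_rows inner_unvec_rows[of x x] sum_distrib_left
    sigma_min_sq_W_eq sigma_max_sq_W_eq
  by (intro sum_mono sigma_min_sq_X_le sigma_max_sq_X_ge)+

lemma
  fixes s y :: "real^'n"
  assumes s: "\<And>j. s $ j \<in> {\<alpha>, 1}" and \<alpha>: "0 \<le> \<alpha>" "\<alpha> \<le> 1"
  shows diag_mat_mult_ge: "\<alpha>\<^sup>2 * (y \<bullet> y) \<le> (diag_mat s *v y) \<bullet> (diag_mat s *v y)"
    and diag_mat_mult_le: "(diag_mat s *v y) \<bullet> (diag_mat s *v y) \<le> y \<bullet> y"
proof -
  have Dy: "(diag_mat s *v y) \<bullet> (diag_mat s *v y) = (\<Sum>j\<in>UNIV. (s$j)\<^sup>2 * (y$j)\<^sup>2)"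
    by (simp add: inner_vec_def matrix_vector_mult_def diag_mat_def if_distrib if_distribR
        power2_eq_square mult_ac cong: if_cong)
  have y: "y \<bullet> y = (\<Sum>j\<in>UNIV. (y$j)\<^sup>2)" by (simp add: inner_vec_def power2_eq_square)
  have "\<alpha>\<^sup>2 \<le> 1" using \<alpha> by (simp add: power_le_one)
  then have sj: "\<alpha>\<^sup>2 \<le> (s$j)\<^sup>2" "(s$j)\<^sup>2 \<le> 1" for j using s[of j] by auto
  show "\<alpha>\<^sup>2 * (y \<bullet> y) \<le> (diag_mat s *v y) \<bullet> (diag_mat s *v y)"
    unfolding Dy y sum_distrib_left by (intro sum_mono mult_right_mono sj) simp
  show "(diag_mat s *v y) \<bullet> (diag_mat s *v y) \<le> y \<bullet> y"
    unfolding Dy y by (intro sum_mono mult_left_le_one_le sj) simp_all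
qed

lemma form_sandwich_gram:
  assumes "symmetric_mat D"
  shows "y \<bullet> ((D ** transpose X ** X ** D) *v y) = (X *v (D *v y)) \<bullet> (X *v (D *v y))"
proof -
  have "D ** transpose X ** X ** D = transpose (X ** D) ** (X ** D)"
    using assms by (simp add: symmetric_mat_def matrix_transpose_mul matrix_mul_assoc)
  then show ?thesis by (simp add: gram_form matrix_vector_mul_assoc)
qed

lemma
  fixes X :: "real^'n^'d" and W :: "real^'m^'k" and s :: "'m \<Rightarrow> real^'n" and x :: "real^('n \<times> 'k)"
  assumes s: "\<And>i j. s i $ j \<in> {\<alpha>, 1}" and \<alpha>: "0 \<le> \<alpha>" "\<alpha> \<le> 1"
  defines "F \<equiv> \<Sum>i\<in>UNIV. x \<bullet> (kron (diag_mat (s i) ** transpose X ** X ** diag_mat (s i))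
                                   (outer (column i W)) *v x)"
  shows sigma_min_sq_le_form_sum_kron: "\<alpha>\<^sup>2 * sigma_min_sq_X X * sigma_min_sq_W W * (x \<bullet> x) \<le> F"
    and form_sum_kron_le_sigma_max_sq: "F \<le> sigma_max_sq_X X * sigma_max_sq_W W * (x \<bullet> x)"
proof -
  define y where "y i = unvec x *v column i W" for i
  define z where "z i = X *v (diag_mat (s i) *v y i)" for i
  have F: "F = (\<Sum>i\<in>UNIV. z i \<bullet> z i)"
    unfolding F_def z_def y_def form_kron_outer form_sandwich_gram[OF symmetric_mat_diag_mat] ..
  have z_ge: "\<alpha>\<^sup>2 * sigma_min_sq_X X * (y i \<bullet> y i) \<le> z i \<bullet> z i" for i
  proof -
    have "\<alpha>\<^sup>2 * sigma_min_sq_X X * (y i \<bullet> y i) = sigma_min_sq_X X * (\<alpha>\<^sup>2 * (y i \<bullet> y i))"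
      by simp
    also have "\<dots> \<le> sigma_min_sq_X X * ((diag_mat (s i) *v y i) \<bullet> (diag_mat (s i) *v y i))"
      by (intro mult_left_mono diag_mat_mult_ge s \<alpha> sigma_min_sq_X_nonneg)
    also have "\<dots> \<le> z i \<bullet> z i" unfolding z_def by (rule sigma_min_sq_X_le)
    finally show ?thesis .
  qed
  have z_le: "z i \<bullet> z i \<le> sigma_max_sq_X X * (y i \<bullet> y i)" for i
  proof -
    have "z i \<bullet> z i \<le> sigma_max_sq_X X * ((diag_mat (s i) *v y i) \<bullet> (diag_mat (s i) *v y i))"
      unfolding z_def by (rule sigma_max_sq_X_ge)
    also have "\<dots> \<le> sigma_max_sq_X X * (y i \<bullet> y i)"
      by (intro mult_left_mono diag_mat_mult_le[where \<alpha> = \<alpha>] s \<alpha> sigma_max_sq_X_nonneg)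
    finally show ?thesis .
  qed
  have "0 \<le> \<alpha>\<^sup>2 * sigma_min_sq_X X" using sigma_min_sq_X_nonneg[of X] by simp
  then have "\<alpha>\<^sup>2 * sigma_min_sq_X X * sigma_min_sq_W W * (x \<bullet> x)
      \<le> \<alpha>\<^sup>2 * sigma_min_sq_X X * (\<Sum>i\<in>UNIV. y i \<bullet> y i)"
    unfolding y_def mult.assoc[of "\<alpha>\<^sup>2 * sigma_min_sq_X X"]
    by (intro mult_left_mono sigma_min_sq_W_le_sum_unvec)
  also have "\<dots> \<le> F" unfolding F sum_distrib_left by (intro sum_mono z_ge)
  finally show "\<alpha>\<^sup>2 * sigma_min_sq_X X * sigma_min_sq_W W * (x \<bullet> x) \<le> F" .
  have "F \<le> sigma_max_sq_X X * (\<Sum>i\<in>UNIV. y i \<bullet> y i)"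
    unfolding F sum_distrib_left by (intro sum_mono z_le)
  also have "\<dots> \<le> sigma_max_sq_X X * sigma_max_sq_W W * (x \<bullet> x)"
    unfolding y_def mult.assoc
    by (intro mult_left_mono sum_unvec_le_sigma_max_sq_W sigma_max_sq_X_nonneg)
  finally show "F \<le> sigma_max_sq_X X * sigma_max_sq_W W * (x \<bullet> x)" .
qed

theorem mainTheorem5:
  fixes \<alpha> :: real
    and X :: "real^'n^'d" and V :: "real^'d^'m" and W :: "real^'m^'k"
    and Lam :: "'m \<Rightarrow> real^'n^'n"
    and \<Gamma> :: "real^'n^'n"
    and G :: "real^('n \<times> 'k)^('n \<times> 'k)"
  assumes alpha: "0 \<le> \<alpha>" "\<alpha> \<le> 1"
    and Lam_def: "\<And>i. \<exists>s. Lam i = diag_mat s \<and>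
                    (\<forall>j. leaky_relu_deriv_choice \<alpha> ((transpose X *v row i V) $ j) (s $ j))"
    and Gamma_def: "\<Gamma> = (\<Sum>i\<in>UNIV. Lam i ** transpose X ** outer (row i V) ** X ** Lam i)"
    and G_def: "G = (\<Sum>i\<in>UNIV. kron (Lam i ** transpose X ** X ** Lam i) (outer (column i W)))
                    + kron \<Gamma> (mat 1)"
    and pos: "\<alpha>\<^sup>2 * sigma_min_sq_X X * sigma_min_sq_W W + lambda_min \<Gamma> > 0"
  shows "pos_def G \<and>
         cond_num G \<le> (sigma_max_sq_X X * sigma_max_sq_W W + lambda_max \<Gamma>) /
                       (\<alpha>\<^sup>2 * sigma_min_sq_X X * sigma_min_sq_W W + lambda_min \<Gamma>)"
proof -
  obtain s where Lam: "\<And>i. Lam i = diag_mat (s i)"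
    and deriv: "\<And>i j. leaky_relu_deriv_choice \<alpha> ((transpose X *v row i V) $ j) (s i $ j)"
    using Lam_def by metis
  have s: "s i $ j \<in> {\<alpha>, 1}" for i j
    using deriv[of i j] unfolding leaky_relu_deriv_choice_def by blast
  have "symmetric_mat \<Gamma>" unfolding Gamma_def Lam
    by (intro symmetric_mat_sum symmetric_mat_sandwich symmetric_mat_diag_mat symmetric_mat_outer)
  then have "symmetric_mat G" unfolding G_def Lam
    by (intro symmetric_mat_add symmetric_mat_sum symmetric_mat_kron symmetric_mat_sandwich_gram
        symmetric_mat_diag_mat symmetric_mat_outer symmetric_mat_mat)
  have form_G: "x \<bullet> (G *v x)
      = (\<Sum>i\<in>UNIV. x \<bullet> (kron (diag_mat (s i) ** transpose X ** X ** diag_mat (s i))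
                                   (outer (column i W)) *v x))
        + x \<bullet> (kron \<Gamma> (mat 1) *v x)" for x
    unfolding G_def Lam
    by (simp add: matrix_vector_mult_add_rdistrib matrix_vector_mult_sum_left inner_add_right inner_sum_right)
  show ?thesis
  proof (rule pos_def_cond_num_le[OF \<open>symmetric_mat G\<close> pos])
    show "(\<alpha>\<^sup>2 * sigma_min_sq_X X * sigma_min_sq_W W + lambda_min \<Gamma>) * (x \<bullet> x) \<le> x \<bullet> (G *v x)" for x
      using sigma_min_sq_le_form_sum_kron[where s = s and X = X and W = W and x = x, OF s alpha]
        lambda_min_le_form_kron_mat_1[OF \<open>symmetric_mat \<Gamma>\<close>, of x]
      unfolding form_G distrib_right by linarith
    show "x \<bullet> (G *v x) \<le> (sigma_max_sq_X X * sigma_max_sq_W W + lambda_max \<Gamma>) * (x \<bullet> x)" for x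
      using form_sum_kron_le_sigma_max_sq[where s = s and X = X and W = W and x = x, OF s alpha]
        form_kron_mat_1_le_lambda_max[OF \<open>symmetric_mat \<Gamma>\<close>, of x]
      unfolding form_G distrib_right by linarith
  qed
qed

end
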